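(* Consider the system of ordinary differential equations \[ \begin{aligned} \frac{dr_a}{dt} &= \frac{m_a(p_a/\theta_{aa})^{n_{aa}}}{1+(p_a/\theta_{aa})^{n_{aa}}(p_b/\theta_b)^{n_b}}-\gamma_a r_a+A_1,\\ \frac{dr_b}{dt} &= \frac{m_b}{1+(p_a/\theta_a)^{n_a}}-\gamma_b r_b+B_1,\\ \frac{dp_a}{dt} &= k_a r_a-\delta_a p_a,\qquad \frac{dp_b}{dt} = k_b r_b-\delta_b p_b, \end{aligned} \] where $m_a,m_b,\gamma_a,\gamma_b,k_a,k_b,\delta_a,\delta_b,\theta_a,\theta_b,\theta_{aa}>0$, $A_1,B_1\ge 0$, and $n_a,n_b,n_{aa}$ are positive integers. Let $S^*=(r_a^*,r_b^*,p_a^*,p_b^* )$ be a steady state of this system with $p_a^*>0$, $p_b^*>0$. Set, with $p_a=p_a^*$, $p_b=p_b^*$, \[ X=\frac{m_a n_{aa} p_a^{n_{aa}-1}\theta_b^{2n_b}\theta_{aa}^{n_{aa}}}{(p_a^{n_{aa}}p_b^{n_b}+\theta_b^{n_b}\theta_{aa}^{n_{aa}})^2},\quad Y=-\frac{m_a n_b p_a^{2n_{aa}}p_b^{n_b-1}\theta_b^{n_b}}{(p_a^{n_{aa}}p_b^{n_b}+\theta_b^{n_b}\theta_{aa}^{n_{aa}})^2},\quad Z=-\frac{m_b n_a p_a^{n_a-1}\theta_a^{n_a}}{(p_a^{n_a}+\theta_a^{n_a})^2}, \] and \[ \begin{aligned} \epsilon_1&=\gamma_a+\gamma_b+\delta_a+\delta_b,\\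 \epsilon_2&=\gamma_a\gamma_b+(\gamma_a+\gamma_b)(\delta_a+\delta_b)+\delta_a\delta_b-k_aX,\\ \epsilon_3&=\delta_a\delta_b(\gamma_a+\gamma_b)+(\delta_a+\delta_b)\gamma_a\gamma_b-k_a(\delta_b+\gamma_b)X,\\ \epsilon_4&=\gamma_a\gamma_b\delta_a\delta_b-k_ak_bYZ-k_a\gamma_b\delta_bX. \end{aligned} \] If $\epsilon_1>0$, $\epsilon_3>0$, $\epsilon_4>0$ and $\epsilon_1\epsilon_2\epsilon_3-\epsilon_1^2\epsilon_4-\epsilon_3^2>0$, then $S^*$ is locally asymptotically stable.
   Context: This models a two-gene network in which gene $a$ is co-regulated by activation from its own protein $p_a$ and repression by protein $p_b$ (combined via a non-competitive AND logic), and gene $b$ is repressed by $p_a$; $r_a,r_b$ are mRNA concentrations and $p_a,p_b$ protein concentrations. A steady state is a point where all four right-hand sides vanish. *)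

theory Defs
  imports "HOL-Analysis.Analysis"
begin

type_synonym state = "real \<times> real \<times> real \<times> real"  (* (r_a, r_b, p_a, p_b) *)

definition grn_field ::
  "real \<Rightarrow> real \<Rightarrow> real \<Rightarrow> real \<Rightarrow> real \<Rightarrow> real \<Rightarrow> real \<Rightarrow> real \<Rightarrow>
   real \<Rightarrow> real \<Rightarrow> real \<Rightarrow> real \<Rightarrow> real \<Rightarrow> nat \<Rightarrow> nat \<Rightarrow> nat \<Rightarrow> state \<Rightarrow> state" where
  "grn_field ma mb ga gb ka kb da db tha thb thaa A1 B1 na nb naa =
     (\<lambda>(ra, rb, pa, pb).
        (ma * (pa / thaa) ^ naa / (1 + (pa / thaa) ^ naa * (pb / thb) ^ nb) - ga * ra + A1,
         mb / (1 + (pa / tha) ^ na) - gb * rb + B1,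
         ka * ra - da * pa,
         kb * rb - db * pb))"

definition is_solution :: "('a::real_normed_vector \<Rightarrow> 'a) \<Rightarrow> (real \<Rightarrow> 'a) \<Rightarrow> bool" where
  "is_solution F x \<longleftrightarrow>
     (\<forall>t\<ge>0. (x has_vector_derivative F (x t)) (at t within {0..}))"

definition lyapunov_stable :: "('a::real_normed_vector \<Rightarrow> 'a) \<Rightarrow> 'a \<Rightarrow> bool" where
  "lyapunov_stable F S \<longleftrightarrow>
     (\<forall>\<epsilon>>0. \<exists>\<delta>>0. \<forall>x. is_solution F x \<and> dist (x 0) S < \<delta> \<longrightarrow>
        (\<forall>t\<ge>0. dist (x t) S < \<epsilon>))"

definition locally_attractive :: "('a::real_normed_vector \<Rightarrow> 'a) \<Rightarrow> 'a \<Rightarrow> bool" where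
  "locally_attractive F S \<longleftrightarrow>
     (\<exists>\<eta>>0. \<forall>x. is_solution F x \<and> dist (x 0) S < \<eta> \<longrightarrow> (x \<longlongrightarrow> S) at_top)"

definition locally_asymptotically_stable :: "('a::real_normed_vector \<Rightarrow> 'a) \<Rightarrow> 'a \<Rightarrow> bool" where
  "locally_asymptotically_stable F S \<longleftrightarrow>
     F S = 0 \<and> lyapunov_stable F S \<and> locally_attractive F S"

end

(* The Jacobian J of the field at the steady state S satisfies
   J^4 + e1 J^3 + e2 J^2 + e3 J + e4 = 0, and the hypotheses are the Routh-Hurwitz conditions for
   this quartic.  They give a factorisation e1 = b1, e2 = b2 + b3 + b4, e3 = b1 (b3 + b4),
   e4 = b2 b4 with all b_i > 0, and from it an explicit positive definite quadratic form B with
   B(h, J h) = -b1 |J^3 h + (b3 + b4) J h|^2 <= 0.  The Routh-Hurwitz conditions are open, so the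
   same construction for J + mu with a small mu > 0 yields B(h, J h) <= -mu B(h, h).  As J is the
   derivative of the field at S, B(x - S, x - S) then decays exponentially along every solution
   starting close to S. *)

theory Submission
  imports Defs
begin

lemma exp_decay_of_differential_inequality:
  fixes \<phi> \<phi>' :: "real \<Rightarrow> real"
  assumes "0 \<le> T" and cont: "continuous_on {0..T} \<phi>"
    and deriv: "\<And>t. 0 < t \<Longrightarrow> t < T \<Longrightarrow> (\<phi> has_real_derivative \<phi>' t) (at t)"
    and bound: "\<And>t. 0 < t \<Longrightarrow> t < T \<Longrightarrow> \<phi>' t \<le> - \<mu> * \<phi> t"
  shows "\<phi> T \<le> \<phi> 0 * exp (- \<mu> * T)"
proof -
  define \<psi> where "\<psi> t = \<phi> t * exp (\<mu> * t)" for t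
  have "\<psi> T \<le> \<psi> 0"
  proof (rule DERIV_nonpos_imp_decreasing_open[OF \<open>0 \<le> T\<close>])
    fix t assume t: "0 < t" "t < T"
    have "(\<psi> has_real_derivative (\<phi>' t + \<mu> * \<phi> t) * exp (\<mu> * t)) (at t)"
      unfolding \<psi>_def using deriv[OF t]
      by (auto intro!: derivative_eq_intros simp: algebra_simps)
    moreover have "(\<phi>' t + \<mu> * \<phi> t) * exp (\<mu> * t) \<le> 0"
      using bound[OF t] by (simp add: mult_nonpos_nonneg)
    ultimately show "\<exists>y. (\<psi> has_real_derivative y) (at t) \<and> y \<le> 0" by blast
  next
    show "continuous_on {0..T} \<psi>"
      unfolding \<psi>_def by (intro continuous_intros cont)
  qed
  then have "\<phi> T * exp (\<mu> * T) * exp (- \<mu> * T) \<le> \<phi> 0 * exp (- \<mu> * T)"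
    by (intro mult_right_mono) (simp_all add: \<psi>_def)
  then show ?thesis by (simp add: mult.assoc flip: exp_add)
qed

lemma exp_decay_below_threshold:
  fixes \<phi> \<phi>' :: "real \<Rightarrow> real"
  assumes cont: "continuous_on {0..} \<phi>" and start: "0 \<le> \<phi> 0" "\<phi> 0 < c" and "0 \<le> \<mu>"
    and deriv: "\<And>t. 0 < t \<Longrightarrow> \<phi> t < c \<Longrightarrow> (\<phi> has_real_derivative \<phi>' t) (at t)"
    and bound: "\<And>t. 0 < t \<Longrightarrow> \<phi> t < c \<Longrightarrow> \<phi>' t \<le> - \<mu> * \<phi> t"
    and "0 \<le> t"
  shows "\<phi> t \<le> \<phi> 0 * exp (- \<mu> * t)"
proof -
  have decay: "\<phi> T \<le> \<phi> 0 * exp (- \<mu> * T)"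
    if "0 \<le> T" "\<And>s. 0 < s \<Longrightarrow> s < T \<Longrightarrow> \<phi> s < c" for T
  proof (rule exp_decay_of_differential_inequality[OF \<open>0 \<le> T\<close>])
    show "continuous_on {0..T} \<phi>" by (rule continuous_on_subset[OF cont]) auto
  qed (use that deriv bound in auto)
  \<comment> \<open>At the first time \<open>t0\<close> with \<open>c \<le> \<phi> t0\<close>, decay on \<open>[0, t0]\<close> would give
    \<open>\<phi> t0 \<le> \<phi> 0 < c\<close>.\<close>
  have below: "\<phi> s < c" if "0 \<le> s" for s
  proof (rule ccontr)
    assume "\<not> \<phi> s < c"
    then have ne: "{0..s} \<inter> \<phi> -` {c..} \<noteq> {}" using that by auto
    have "closed ({0..s} \<inter> \<phi> -` {c..})"
      by (intro continuous_closed_preimage continuous_on_subset[OF cont]) auto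
    then obtain t0 where t0: "t0 \<in> {0..s} \<inter> \<phi> -` {c..}"
      and first: "\<And>u. u \<in> {0..s} \<inter> \<phi> -` {c..} \<Longrightarrow> t0 \<le> u"
      using closed_contains_Inf[OF ne] cInf_lower[of _ "{0..s} \<inter> \<phi> -` {c..}"]
      by (metis bdd_below_Int1 bdd_below_Icc)
    have "\<phi> t0 \<le> \<phi> 0 * exp (- \<mu> * t0)"
    proof (rule decay)
      show "0 \<le> t0" using t0 by auto
      fix u assume "0 < u" "u < t0"
      then show "\<phi> u < c" using first[of u] t0 by (auto simp: not_le[symmetric])
    qed
    also have "\<dots> \<le> \<phi> 0"
      using t0 start \<open>0 \<le> \<mu>\<close> by (intro mult_left_le) auto
    finally show False using t0 start by auto
  qed
  show ?thesis using below \<open>0 \<le> t\<close> by (intro decay) simp_all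
qed

lemma exp_neg_mult_tendsto_zero:
  fixes \<mu> :: real
  assumes "\<mu> > 0"
  shows "((\<lambda>t. exp (- \<mu> * t)) \<longlongrightarrow> 0) at_top"
proof -
  have "filterlim (\<lambda>t. - \<mu> * t) at_bot at_top"
    using assms by (intro filterlim_tendsto_neg_mult_at_bot[OF tendsto_const] filterlim_ident) auto
  then show ?thesis by (rule filterlim_compose[OF exp_at_bot])
qed

lemma locally_asymptotically_stable_of_exponential_decay:
  fixes F :: "'a::real_normed_vector \<Rightarrow> 'a"
  assumes "F S = 0" "r > 0" "C > 0" "\<mu> > 0"
    and decay: "\<And>x t. is_solution F x \<Longrightarrow> dist (x 0) S < r \<Longrightarrow> 0 \<le> t \<Longrightarrow>
                  dist (x t) S \<le> C * dist (x 0) S * exp (- \<mu> * t)"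
  shows "locally_asymptotically_stable F S"
proof -
  have "lyapunov_stable F S"
    unfolding lyapunov_stable_def
  proof (intro allI impI)
    fix \<epsilon> :: real assume "\<epsilon> > 0"
    show "\<exists>\<delta>>0. \<forall>x. is_solution F x \<and> dist (x 0) S < \<delta> \<longrightarrow> (\<forall>t\<ge>0. dist (x t) S < \<epsilon>)"
    proof (intro exI[of _ "min r (\<epsilon> / C)"] conjI allI impI)
      fix x t assume x: "is_solution F x \<and> dist (x 0) S < min r (\<epsilon> / C)" and "(0::real) \<le> t"
      have "dist (x t) S \<le> C * dist (x 0) S * exp (- \<mu> * t)"
        using x \<open>0 \<le> t\<close> by (intro decay) auto
      also have "\<dots> \<le> C * dist (x 0) S"
        using \<open>C > 0\<close> \<open>0 \<le> t\<close> \<open>\<mu> > 0\<close> by (intro mult_left_le) auto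
      also have "\<dots> < \<epsilon>"
        using x \<open>C > 0\<close> by (simp add: field_simps)
      finally show "dist (x t) S < \<epsilon>" .
    qed (use \<open>r > 0\<close> \<open>C > 0\<close> \<open>\<epsilon> > 0\<close> in auto)
  qed
  moreover have "locally_attractive F S"
    unfolding locally_attractive_def
  proof (intro exI[of _ r] conjI allI impI)
    fix x assume x: "is_solution F x \<and> dist (x 0) S < r"
    have "eventually (\<lambda>t. norm (dist (x t) S) \<le> C * dist (x 0) S * exp (- \<mu> * t)) at_top"
      using eventually_ge_at_top[of 0] by eventually_elim (use x decay in auto)
    moreover have "((\<lambda>t. C * dist (x 0) S * exp (- \<mu> * t)) \<longlongrightarrow> 0) at_top"
      using exp_neg_mult_tendsto_zero[OF \<open>\<mu> > 0\<close>] by (rule tendsto_mult_right_zero)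
    ultimately have "((\<lambda>t. dist (x t) S) \<longlongrightarrow> 0) at_top"
      by (rule Lim_null_comparison)
    then show "(x \<longlongrightarrow> S) at_top" using tendsto_dist_iff by blast
  qed (rule \<open>r > 0\<close>)
  ultimately show ?thesis
    unfolding locally_asymptotically_stable_def using \<open>F S = 0\<close> by blast
qed

lemma quadratic_form_decreases_near_equilibrium:
  fixes F A :: "'a::real_normed_vector \<Rightarrow> 'a" and B :: "'a \<Rightarrow> 'a \<Rightarrow> real"
  assumes "F S = 0" and dF: "(F has_derivative A) (at S)" and "bounded_bilinear B"
    and "m > 0" and lower: "\<And>h. m * (norm h)\<^sup>2 \<le> B h h"
    and "\<mu> > 0" and neg: "\<And>h. B h (A h) \<le> - \<mu> * B h h"
  shows "\<exists>r>0. \<forall>y. norm (y - S) < r \<longrightarrow> 2 * B (y - S) (F y) \<le> - \<mu> * B (y - S) (y - S)"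
proof -
  interpret B: bounded_bilinear B by fact
  obtain K where "K > 0" and K: "\<And>a b. norm (B a b) \<le> norm a * norm b * K"
    using B.pos_bounded by blast
  \<comment> \<open>The linearisation error may use up half of the decay rate \<open>\<mu>\<close>.\<close>
  define \<eta> where "\<eta> = \<mu> * m / (2 * K)"
  have "\<eta> > 0" using \<open>\<mu> > 0\<close> \<open>m > 0\<close> \<open>K > 0\<close> by (simp add: \<eta>_def)
  then obtain r where "r > 0"
    and r: "\<And>y. norm (y - S) < r \<Longrightarrow> norm (F y - F S - A (y - S)) \<le> \<eta> * norm (y - S)"
    using dF unfolding has_derivative_at_alt by blast
  have "2 * B (y - S) (F y) \<le> - \<mu> * B (y - S) (y - S)" if y: "norm (y - S) < r" for y
  proof -
    define h where "h = y - S"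
    have "B h (F y) = B h (A h) + B h (F y - A h)"
      by (simp flip: B.add_right)
    moreover have "\<bar>B h (F y - A h)\<bar> \<le> norm h * (\<eta> * norm h) * K"
    proof -
      have "norm (F y - A h) \<le> \<eta> * norm h"
        using r[OF y] \<open>F S = 0\<close> by (simp add: h_def)
      then show ?thesis
        using K[of h "F y - A h"] \<open>K > 0\<close>
        by (smt (verit) mult_left_mono mult_right_mono norm_ge_zero real_norm_def)
    qed
    moreover have "norm h * (\<eta> * norm h) * K = \<mu> / 2 * (m * (norm h)\<^sup>2)"
      using \<open>K > 0\<close> by (simp add: \<eta>_def power2_eq_square field_simps)
    moreover have "\<mu> / 2 * (m * (norm h)\<^sup>2) \<le> \<mu> / 2 * B h h"
      using lower[of h] \<open>\<mu> > 0\<close> by simp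
    ultimately show ?thesis
      using neg[of h] unfolding h_def by linarith
  qed
  with \<open>r > 0\<close> show ?thesis by blast
qed

lemma quadratic_form_decay_along_solution:
  fixes F :: "'a::real_normed_vector \<Rightarrow> 'a" and B :: "'a \<Rightarrow> 'a \<Rightarrow> real"
  assumes "bounded_bilinear B" and sym: "\<And>u v. B u v = B v u"
    and "m > 0" and lower: "\<And>h. m * (norm h)\<^sup>2 \<le> B h h" and "0 \<le> \<mu>"
    and "0 < r"
    and decrease: "\<And>y. norm (y - S) < r \<Longrightarrow> 2 * B (y - S) (F y) \<le> - \<mu> * B (y - S) (y - S)"
    and sol: "is_solution F x" and start: "B (x 0 - S) (x 0 - S) < m * r\<^sup>2" and "0 \<le> t"
  shows "B (x t - S) (x t - S) \<le> B (x 0 - S) (x 0 - S) * exp (- \<mu> * t)"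
proof -
  interpret B: bounded_bilinear B by fact
  define \<phi> where "\<phi> t = B (x t - S) (x t - S)" for t
  have d\<phi>: "(\<phi> has_real_derivative 2 * B (x t - S) (F (x t))) (at t within {0..})"
    if "0 \<le> t" for t
  proof -
    have "((\<lambda>t. x t - S) has_vector_derivative F (x t)) (at t within {0..})"
      using sol that unfolding is_solution_def by (auto intro!: derivative_eq_intros)
    from B.has_vector_derivative[OF this this]
    show ?thesis
      unfolding \<phi>_def[abs_def] has_real_derivative_iff_has_vector_derivative
      by (simp add: sym[of "F (x t)"])
  qed
  have near: "norm (x t - S) < r" if "\<phi> t < m * r\<^sup>2" for t
  proof -
    have "m * (norm (x t - S))\<^sup>2 < m * r\<^sup>2"
      using lower[of "x t - S"] that by (simp add: \<phi>_def)
    then have "(norm (x t - S))\<^sup>2 < r\<^sup>2" using \<open>m > 0\<close> by simp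
    then show ?thesis using \<open>0 < r\<close> by (simp add: power2_less_imp_less)
  qed
  have "\<phi> t \<le> \<phi> 0 * exp (- \<mu> * t)"
  proof (rule exp_decay_below_threshold[where c = "m * r\<^sup>2"])
    show "continuous_on {0..} \<phi>"
      using d\<phi> DERIV_continuous continuous_on_eq_continuous_within by (metis atLeast_iff)
    have "0 \<le> m * (norm (x 0 - S))\<^sup>2" using \<open>m > 0\<close> by simp
    then show "0 \<le> \<phi> 0" using lower[of "x 0 - S"] unfolding \<phi>_def by linarith
    fix s assume "0 < s" "\<phi> s < m * r\<^sup>2"
    moreover have "at s within {0..} = at s"
      using \<open>0 < s\<close> by (intro at_within_interior) simp
    ultimately show "(\<phi> has_real_derivative 2 * B (x s - S) (F (x s))) (at s)"
      and "2 * B (x s - S) (F (x s)) \<le> - \<mu> * \<phi> s"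
      using d\<phi>[of s] decrease[OF near] by (auto simp: \<phi>_def)
  qed (use start \<open>0 \<le> \<mu>\<close> \<open>0 \<le> t\<close> in \<open>simp_all add: \<phi>_def\<close>)
  then show ?thesis by (simp add: \<phi>_def)
qed

lemma locally_asymptotically_stable_of_quadratic_lyapunov:
  fixes F A :: "'a::real_normed_vector \<Rightarrow> 'a" and B :: "'a \<Rightarrow> 'a \<Rightarrow> real"
  assumes "F S = 0" and dF: "(F has_derivative A) (at S)"
    and "bounded_bilinear B" and sym: "\<And>u v. B u v = B v u"
    and "m > 0" and lower: "\<And>h. m * (norm h)\<^sup>2 \<le> B h h"
    and "\<mu> > 0" and neg: "\<And>h. B h (A h) \<le> - \<mu> * B h h"
  shows "locally_asymptotically_stable F S"
proof -
  interpret B: bounded_bilinear B by fact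
  obtain K where "K > 0" and K: "\<And>a b. norm (B a b) \<le> norm a * norm b * K"
    using B.pos_bounded by blast
  have upper: "B h h \<le> K * (norm h)\<^sup>2" for h
    using K[of h h] by (simp add: power2_eq_square mult_ac)
  obtain r where "r > 0"
    and decrease: "\<And>y. norm (y - S) < r \<Longrightarrow> 2 * B (y - S) (F y) \<le> - \<mu> * B (y - S) (y - S)"
    using quadratic_form_decreases_near_equilibrium[where A = A and B = B,
        OF \<open>F S = 0\<close> dF \<open>bounded_bilinear B\<close> \<open>m > 0\<close> lower \<open>\<mu> > 0\<close> neg]
    by blast
  show ?thesis
  proof (rule locally_asymptotically_stable_of_exponential_decay)
    show "r * sqrt (m / K) > 0" "sqrt (K / m) > 0" "\<mu> / 2 > 0"
      using \<open>r > 0\<close> \<open>m > 0\<close> \<open>K > 0\<close> \<open>\<mu> > 0\<close> by auto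
    fix x and t :: real
    assume sol: "is_solution F x" and x0: "dist (x 0) S < r * sqrt (m / K)" and "0 \<le> t"
    define d where "d s = dist (x s) S" for s
    have "B (x 0 - S) (x 0 - S) \<le> K * (d 0)\<^sup>2"
      using upper by (simp add: d_def dist_norm)
    also have "\<dots> < K * (r * sqrt (m / K))\<^sup>2"
      using x0 \<open>K > 0\<close> by (intro mult_strict_left_mono power_strict_mono) (auto simp: d_def)
    also have "\<dots> = m * r\<^sup>2"
      using \<open>K > 0\<close> \<open>m > 0\<close> by (simp add: power_mult_distrib)
    finally have "B (x 0 - S) (x 0 - S) < m * r\<^sup>2" .
    then have "B (x t - S) (x t - S) \<le> B (x 0 - S) (x 0 - S) * exp (- \<mu> * t)"
      using \<open>0 \<le> t\<close> \<open>\<mu> > 0\<close> \<open>r > 0\<close>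
      by (intro quadratic_form_decay_along_solution[OF \<open>bounded_bilinear B\<close> sym \<open>m > 0\<close> lower _ _ decrease sol]) auto
    then have "m * (d t)\<^sup>2 \<le> K * (d 0)\<^sup>2 * exp (- \<mu> * t)"
      using lower[of "x t - S"] upper[of "x 0 - S"]
      by (simp add: d_def dist_norm) (smt (verit) exp_gt_zero mult_right_mono)
    also have "\<dots> = m * (sqrt (K / m) * d 0 * exp (- (\<mu> / 2) * t))\<^sup>2"
      using \<open>K > 0\<close> \<open>m > 0\<close> by (simp add: power_mult_distrib flip: exp_add exp_double)
    finally have "(d t)\<^sup>2 \<le> (sqrt (K / m) * d 0 * exp (- (\<mu> / 2) * t))\<^sup>2"
      using \<open>m > 0\<close> by simp
    then have "d t \<le> sqrt (K / m) * d 0 * exp (- (\<mu> / 2) * t)"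
      by (rule power2_le_imp_le) (use \<open>K > 0\<close> \<open>m > 0\<close> in \<open>simp add: d_def\<close>)
    then show "dist (x t) S \<le> sqrt (K / m) * dist (x 0) S * exp (- (\<mu> / 2) * t)"
      by (simp add: d_def)
  qed fact
qed

text \<open>\<open>b1, b2, b1 * b3, b2 * b4\<close> is the first column of the Routh array of
  \<open>x ^ 4 + a1 * x ^ 3 + a2 * x\<^sup>2 + a3 * x + a4\<close>.\<close>

lemma hurwitz4_coefficients_factor:
  fixes a1 a2 a3 a4 :: real
  assumes "a1 > 0" "a3 > 0" "a4 > 0" "a1 * a2 * a3 - a1\<^sup>2 * a4 - a3\<^sup>2 > 0"
  obtains b1 b2 b3 b4 where "b1 > 0" "b2 > 0" "b3 > 0" "b4 > 0"
    "a1 = b1" "a2 = b2 + b3 + b4" "a3 = b1 * (b3 + b4)" "a4 = b2 * b4"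
proof -
  have routh: "a3 * (a1 * a2 - a3) > a1\<^sup>2 * a4"
    using assms(4) by (simp add: algebra_simps power2_eq_square)
  have "0 < a1\<^sup>2 * a4" using assms(1,3) by simp
  with routh have "0 < a3 * (a1 * a2 - a3)" by linarith
  then have "a1 * a2 - a3 > 0" using assms(2) by (simp add: zero_less_mult_iff)
  define b2 where "b2 = (a1 * a2 - a3) / a1"
  define b4 where "b4 = a4 / b2"
  define b3 where "b3 = a3 / a1 - b4"
  have "b2 > 0" using \<open>a1 * a2 - a3 > 0\<close> assms(1) by (simp add: b2_def)
  have "b3 * (a1 * (a1 * a2 - a3)) = a3 * (a1 * a2 - a3) - a1\<^sup>2 * a4"
    using assms(1) \<open>a1 * a2 - a3 > 0\<close>
    by (simp add: b3_def b4_def b2_def field_simps power2_eq_square)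
  then have "b3 > 0"
    using routh assms(1) \<open>a1 * a2 - a3 > 0\<close> by (smt (verit) mult_pos_pos zero_less_mult_pos2)
  show thesis
  proof (rule that[of a1 b2 b3 b4])
    show "b4 > 0" using \<open>b2 > 0\<close> assms(3) by (simp add: b4_def)
    show "a2 = b2 + b3 + b4" "a3 = a1 * (b3 + b4)"
      using assms(1) by (simp_all add: b2_def b3_def field_simps)
    show "a4 = b2 * b4" using \<open>b2 > 0\<close> by (simp add: b4_def)
  qed (use assms(1) \<open>b2 > 0\<close> \<open>b3 > 0\<close> in auto)
qed

text \<open>A Lyapunov form for operators \<open>N\<close> annihilated by the factored quartic
  \<open>x ^ 4 + b1 * x ^ 3 + (b2 + b3 + b4) * x\<^sup>2 + b1 * (b3 + b4) * x + b2 * b4\<close>.\<close>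

definition hurwitz4_form :: "real \<Rightarrow> real \<Rightarrow> real \<Rightarrow> ('a::real_inner \<Rightarrow> 'a) \<Rightarrow> 'a \<Rightarrow> 'a \<Rightarrow> real"
  where "hurwitz4_form b2 b3 b4 N h w =
    b2 * b3 * b4 * inner h w + b2 * b3 * inner (N h) (N w)
    + b2 * inner (N (N h) + b4 *\<^sub>R h) (N (N w) + b4 *\<^sub>R w)
    + inner (N (N (N h)) + (b3 + b4) *\<^sub>R N h) (N (N (N w)) + (b3 + b4) *\<^sub>R N w)"

lemma hurwitz4_form_commute: "hurwitz4_form b2 b3 b4 N h w = hurwitz4_form b2 b3 b4 N w h"
  by (simp add: hurwitz4_form_def inner_commute)

lemma hurwitz4_form_lower_bound:
  assumes "b2 > 0" "b3 > 0" "b4 > 0"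
  shows "b2 * b3 * b4 * (norm h)\<^sup>2 \<le> hurwitz4_form b2 b3 b4 N h h"
  using assms by (simp add: hurwitz4_form_def power2_norm_eq_inner)

lemma bounded_bilinear_hurwitz4_form:
  fixes N :: "'a::euclidean_space \<Rightarrow> 'a"
  assumes "linear N"
  shows "bounded_bilinear (hurwitz4_form b2 b3 b4 N)"
proof -
  interpret N: linear N by fact
  have "bilinear (hurwitz4_form b2 b3 b4 N)"
    unfolding bilinear_def
    by (auto intro!: linearI simp: hurwitz4_form_def N.add N.scale algebra_simps)
  then show ?thesis by (simp add: bilinear_conv_bounded_bilinear)
qed

lemma hurwitz4_form_derivative:
  fixes N :: "'a::real_inner \<Rightarrow> 'a"
  assumes "N (N (N (N h))) + b1 *\<^sub>R N (N (N h)) + (b2 + b3 + b4) *\<^sub>R N (N h)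
             + (b1 * (b3 + b4)) *\<^sub>R N h + (b2 * b4) *\<^sub>R h = 0"
  shows "hurwitz4_form b2 b3 b4 N h (N h)
           = - b1 * (norm (N (N (N h)) + (b3 + b4) *\<^sub>R N h))\<^sup>2"
proof -
  have N4: "N (N (N (N h))) = - (b1 *\<^sub>R N (N (N h)) + (b2 + b3 + b4) *\<^sub>R N (N h)
             + (b1 * (b3 + b4)) *\<^sub>R N h + (b2 * b4) *\<^sub>R h)"
    using assms by (simp only: eq_neg_iff_add_eq_0 add.assoc)
  show ?thesis
    unfolding hurwitz4_form_def N4
    by (simp add: power2_norm_eq_inner inner_commute algebra_simps)
qed

text \<open>The new coefficients are those of \<open>p (x - \<mu>)\<close>, where \<open>p\<close> is the quartic
  annihilating \<open>A\<close>.\<close>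

lemma quartic_relation_shift:
  fixes A N :: "'a::real_inner \<Rightarrow> 'a"
  assumes "linear A" and N: "\<And>h. N h = A h + \<mu> *\<^sub>R h"
    and "A (A (A (A h))) + a1 *\<^sub>R A (A (A h)) + a2 *\<^sub>R A (A h) + a3 *\<^sub>R A h + a4 *\<^sub>R h = 0"
  shows "N (N (N (N h))) + (a1 - 4 * \<mu>) *\<^sub>R N (N (N h))
           + (a2 - 3 * a1 * \<mu> + 6 * \<mu>\<^sup>2) *\<^sub>R N (N h)
           + (a3 - 2 * a2 * \<mu> + 3 * a1 * \<mu>\<^sup>2 - 4 * \<mu> ^ 3) *\<^sub>R N h
           + (a4 - a3 * \<mu> + a2 * \<mu>\<^sup>2 - a1 * \<mu> ^ 3 + \<mu> ^ 4) *\<^sub>R h = 0"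
proof -
  interpret A: linear A by fact
  have "N (N (N (N h))) + (a1 - 4 * \<mu>) *\<^sub>R N (N (N h))
           + (a2 - 3 * a1 * \<mu> + 6 * \<mu>\<^sup>2) *\<^sub>R N (N h)
           + (a3 - 2 * a2 * \<mu> + 3 * a1 * \<mu>\<^sup>2 - 4 * \<mu> ^ 3) *\<^sub>R N h
           + (a4 - a3 * \<mu> + a2 * \<mu>\<^sup>2 - a1 * \<mu> ^ 3 + \<mu> ^ 4) *\<^sub>R h
         = A (A (A (A h))) + a1 *\<^sub>R A (A (A h)) + a2 *\<^sub>R A (A h) + a3 *\<^sub>R A h + a4 *\<^sub>R h"
    unfolding N
    by (rule vector_eq_rdot[THEN iffD1], rule allI)
      (simp add: A.add A.scale eval_nat_numeral algebra_simps)
  with assms(3) show ?thesis by simp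
qed

lemma hurwitz4_strict_lyapunov_form:
  fixes A :: "'a::euclidean_space \<Rightarrow> 'a"
  assumes "linear A"
    and quartic: "\<And>h. A (A (A (A h))) + a1 *\<^sub>R A (A (A h)) + a2 *\<^sub>R A (A h) + a3 *\<^sub>R A h + a4 *\<^sub>R h = 0"
    and hurwitz: "a1 > 0" "a3 > 0" "a4 > 0" "a1 * a2 * a3 - a1\<^sup>2 * a4 - a3\<^sup>2 > 0"
  obtains B m \<mu> where "bounded_bilinear B" "\<And>u v. B u v = B v u"
    "m > 0" "\<And>h. m * (norm h)\<^sup>2 \<le> B h h" "\<mu> > 0" "\<And>h. B h (A h) \<le> - \<mu> * B h h"
proof -
  define c1 where "c1 \<mu> = a1 - 4 * \<mu>" for \<mu> :: real
  define c2 where "c2 \<mu> = a2 - 3 * a1 * \<mu> + 6 * \<mu>\<^sup>2" for \<mu> :: real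
  define c3 where "c3 \<mu> = a3 - 2 * a2 * \<mu> + 3 * a1 * \<mu>\<^sup>2 - 4 * \<mu> ^ 3" for \<mu> :: real
  define c4 where "c4 \<mu> = a4 - a3 * \<mu> + a2 * \<mu>\<^sup>2 - a1 * \<mu> ^ 3 + \<mu> ^ 4" for \<mu> :: real
  define R where "R \<mu> = c1 \<mu> * c2 \<mu> * c3 \<mu> - (c1 \<mu>)\<^sup>2 * c4 \<mu> - (c3 \<mu>)\<^sup>2" for \<mu>
  \<comment> \<open>The Hurwitz conditions are open, so they survive the shift to \<open>A + \<mu>\<close> for small \<open>\<mu> > 0\<close>.\<close>
  have near0: "\<forall>\<^sub>F \<mu> in at_right 0. 0 < f \<mu>" if "continuous (at_right 0) f" "0 < f 0"
    for f :: "real \<Rightarrow> real"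
    using that order_tendstoD(1)[of f "f 0" "at_right 0" 0] by (simp add: continuous_within)
  have "\<forall>\<^sub>F \<mu> in at_right 0. 0 < \<mu> \<and> 0 < c1 \<mu> \<and> 0 < c3 \<mu> \<and> 0 < c4 \<mu> \<and> 0 < R \<mu>"
    unfolding R_def c1_def c2_def c3_def c4_def using hurwitz
    by (intro eventually_conj eventually_at_right_less near0 continuous_intros) simp_all
  then obtain \<mu> where "0 < \<mu>" "0 < c1 \<mu>" "0 < c3 \<mu>" "0 < c4 \<mu>" "0 < R \<mu>"
    using eventually_happens' trivial_limit_at_right_real by blast
  obtain b1 b2 b3 b4 where b: "b1 > 0" "b2 > 0" "b3 > 0" "b4 > 0"
    and c: "c1 \<mu> = b1" "c2 \<mu> = b2 + b3 + b4" "c3 \<mu> = b1 * (b3 + b4)" "c4 \<mu> = b2 * b4"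
    using \<open>0 < R \<mu>\<close> unfolding R_def
    by (rule hurwitz4_coefficients_factor[OF \<open>0 < c1 \<mu>\<close> \<open>0 < c3 \<mu>\<close> \<open>0 < c4 \<mu>\<close>])
  define N where "N h = A h + \<mu> *\<^sub>R h" for h
  interpret A: linear A by fact
  have "linear N" unfolding N_def by (intro linearI) (simp_all add: A.add A.scale algebra_simps)
  have N_quartic: "N (N (N (N h))) + b1 *\<^sub>R N (N (N h)) + (b2 + b3 + b4) *\<^sub>R N (N h)
      + (b1 * (b3 + b4)) *\<^sub>R N h + (b2 * b4) *\<^sub>R h = 0" for h
    using quartic_relation_shift[where N = N and \<mu> = \<mu>, OF \<open>linear A\<close> N_def quartic[of h]]
    by (simp only: c1_def[symmetric] c2_def[symmetric] c3_def[symmetric] c4_def[symmetric] c)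
  define B where "B = hurwitz4_form b2 b3 b4 N"
  interpret B: bounded_bilinear B
    unfolding B_def by (rule bounded_bilinear_hurwitz4_form) fact
  show thesis
  proof (rule that)
    show "bounded_bilinear B" ..
    show "B u v = B v u" for u v by (simp add: B_def hurwitz4_form_commute)
    show "b2 * b3 * b4 > 0" "\<And>h. b2 * b3 * b4 * (norm h)\<^sup>2 \<le> B h h"
      using b by (simp_all add: B_def hurwitz4_form_lower_bound)
    show "\<mu> > 0" by fact
    fix h
    have "A h = N h - \<mu> *\<^sub>R h" by (simp add: N_def)
    then have "B h (A h) = B h (N h) - \<mu> * B h h"
      by (simp add: B.diff_right B.scaleR_right)
    also have "B h (N h) \<le> 0"
      using hurwitz4_form_derivative[where N = N, OF N_quartic] b(1) by (simp add: B_def)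
    finally show "B h (A h) \<le> - \<mu> * B h h" by simp
  qed
qed

lemma locally_asymptotically_stable_of_hurwitz4_linearization:
  fixes F A :: "'a::euclidean_space \<Rightarrow> 'a"
  assumes "F S = 0" and dF: "(F has_derivative A) (at S)"
    and quartic: "\<And>h. A (A (A (A h))) + a1 *\<^sub>R A (A (A h)) + a2 *\<^sub>R A (A h) + a3 *\<^sub>R A h + a4 *\<^sub>R h = 0"
    and "a1 > 0" "a3 > 0" "a4 > 0" "a1 * a2 * a3 - a1\<^sup>2 * a4 - a3\<^sup>2 > 0"
  shows "locally_asymptotically_stable F S"
proof (rule hurwitz4_strict_lyapunov_form[OF has_derivative_linear[OF dF] quartic assms(4-7)])
  fix B :: "'a \<Rightarrow> 'a \<Rightarrow> real" and m \<mu> :: real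
  assume "bounded_bilinear B" "\<And>u v. B u v = B v u"
    "m > 0" "\<And>h. m * (norm h)\<^sup>2 \<le> B h h" "\<mu> > 0" "\<And>h. B h (A h) \<le> - \<mu> * B h h"
  then show ?thesis
    by (rule locally_asymptotically_stable_of_quadratic_lyapunov[OF assms(1) dF])
qed

lemma hill_and_gate_eq:
  fixes p q \<theta>\<^sub>1 \<theta>\<^sub>2 :: real
  assumes "\<theta>\<^sub>1 > 0" "\<theta>\<^sub>2 > 0"
  shows "m * (p / \<theta>\<^sub>1) ^ n / (1 + (p / \<theta>\<^sub>1) ^ n * (q / \<theta>\<^sub>2) ^ k)
       = m * \<theta>\<^sub>2 ^ k * p ^ n / (p ^ n * q ^ k + \<theta>\<^sub>2 ^ k * \<theta>\<^sub>1 ^ n)"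
proof -
  have "1 + (p / \<theta>\<^sub>1) ^ n * (q / \<theta>\<^sub>2) ^ k
      = (p ^ n * q ^ k + \<theta>\<^sub>2 ^ k * \<theta>\<^sub>1 ^ n) / (\<theta>\<^sub>1 ^ n * \<theta>\<^sub>2 ^ k)"
    using assms by (simp add: field_simps)
  then show ?thesis
    using assms by (simp add: field_simps)
qed

lemma hill_repression_eq:
  fixes p \<theta> :: real
  assumes "\<theta> > 0"
  shows "m / (1 + (p / \<theta>) ^ n) = m * \<theta> ^ n / (p ^ n + \<theta> ^ n)"
proof -
  have "1 + (p / \<theta>) ^ n = (p ^ n + \<theta> ^ n) / \<theta> ^ n"
    using assms by (simp add: field_simps)
  then show ?thesis using assms by simp
qed

definition grn_jacobian ::
  "real \<Rightarrow> real \<Rightarrow> real \<Rightarrow> real \<Rightarrow> real \<Rightarrow> real \<Rightarrow> real \<Rightarrow> real \<Rightarrow> real \<Rightarrow> state \<Rightarrow> state" where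
  "grn_jacobian ga gb da db ka kb X Y Z = (\<lambda>(u1, u2, u3, u4).
     (- ga * u1 + X * u3 + Y * u4, - gb * u2 + Z * u3, ka * u1 - da * u3, kb * u2 - db * u4))"

lemma grn_jacobian_quartic:
  fixes ga gb da db ka kb X Y Z :: real
  defines "J \<equiv> grn_jacobian ga gb da db ka kb X Y Z"
  shows "J (J (J (J h))) + (ga + gb + da + db) *\<^sub>R J (J (J h))
     + (ga * gb + (ga + gb) * (da + db) + da * db - ka * X) *\<^sub>R J (J h)
     + (da * db * (ga + gb) + (da + db) * ga * gb - ka * (db + gb) * X) *\<^sub>R J h
     + (ga * gb * da * db - ka * kb * Y * Z - ka * gb * db * X) *\<^sub>R h = 0"
proof -
  obtain u1 u2 u3 u4 where h: "h = (u1, u2, u3, u4)" by (cases h rule: prod_cases4)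
  show ?thesis
    unfolding J_def grn_jacobian_def h by (simp add: zero_prod_def) (intro conjI; algebra)
qed

lemma and_gate_term_has_derivative:
  fixes ma thb thaa pa pb :: real
  assumes "thb > 0" "thaa > 0" "pa > 0" "pb > 0"
    and X: "X = ma * real naa * pa ^ (naa - 1) * thb ^ (2 * nb) * thaa ^ naa
                    / (pa ^ naa * pb ^ nb + thb ^ nb * thaa ^ naa) ^ 2"
    and Y: "Y = - (ma * real nb * pa ^ (2 * naa) * pb ^ (nb - 1) * thb ^ nb
                    / (pa ^ naa * pb ^ nb + thb ^ nb * thaa ^ naa) ^ 2)"
  shows "((\<lambda>x::state. ma * thb ^ nb * fst (snd (snd x)) ^ naa
            / (fst (snd (snd x)) ^ naa * snd (snd (snd x)) ^ nb + thb ^ nb * thaa ^ naa))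
          has_derivative (\<lambda>h. X * fst (snd (snd h)) + Y * snd (snd (snd h)))) (at (ra, rb, pa, pb))"
proof -
  define D where "D = pa ^ naa * pb ^ nb + thb ^ nb * thaa ^ naa"
  have "D > 0" using assms(1-4) by (simp add: D_def add_pos_pos)
  have "(ma * thb ^ nb * (real naa * u * pa ^ (naa - Suc 0)) * D
          - ma * thb ^ nb * pa ^ naa * (pa ^ naa * (real nb * v * pb ^ (nb - Suc 0))
          + real naa * u * pa ^ (naa - Suc 0) * pb ^ nb)) / (D * D)
        = X * u + Y * v" for u v
  proof -
    have "ma * thb ^ nb * (real naa * u * pa ^ (naa - Suc 0)) * D
          - ma * thb ^ nb * pa ^ naa * (pa ^ naa * (real nb * v * pb ^ (nb - Suc 0))
          + real naa * u * pa ^ (naa - Suc 0) * pb ^ nb)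
        = ma * real naa * pa ^ (naa - 1) * (thb ^ nb)\<^sup>2 * thaa ^ naa * u
          - ma * real nb * (pa ^ naa)\<^sup>2 * pb ^ (nb - 1) * thb ^ nb * v"
      by (simp add: D_def algebra_simps power2_eq_square)
    then show ?thesis
      using \<open>D > 0\<close> unfolding X Y power_even_eq D_def[symmetric]
      by (simp add: field_simps power2_eq_square)
  qed
  then show ?thesis
    using \<open>D > 0\<close> unfolding D_def
    by (auto intro!: derivative_eq_intros)
qed

lemma repression_term_has_derivative:
  fixes mb tha pa :: real
  assumes "tha > 0" "pa > 0"
    and Z: "Z = - (mb * real na * pa ^ (na - 1) * tha ^ na / (pa ^ na + tha ^ na) ^ 2)"
  shows "((\<lambda>x::state. mb * tha ^ na / (fst (snd (snd x)) ^ na + tha ^ na))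
          has_derivative (\<lambda>h. Z * fst (snd (snd h)))) (at (ra, rb, pa, pb))"
proof -
  define D where "D = pa ^ na + tha ^ na"
  have "D > 0" using assms(1,2) by (simp add: D_def add_pos_pos)
  then have "- (mb * tha ^ na * (real na * u * pa ^ (na - Suc 0)) / (D * D)) = Z * u" for u
    unfolding Z D_def[symmetric] by (simp add: field_simps power2_eq_square)
  then show ?thesis
    using \<open>D > 0\<close> unfolding D_def
    by (auto intro!: derivative_eq_intros)
qed

lemma grn_field_has_derivative:
  fixes ma mb ga gb ka kb da db tha thb thaa A1 B1 ra rb pa pb :: real
  assumes "tha > 0" "thb > 0" "thaa > 0" "pa > 0" "pb > 0"
    and X: "X = ma * real naa * pa ^ (naa - 1) * thb ^ (2 * nb) * thaa ^ naa
                    / (pa ^ naa * pb ^ nb + thb ^ nb * thaa ^ naa) ^ 2"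
    and Y: "Y = - (ma * real nb * pa ^ (2 * naa) * pb ^ (nb - 1) * thb ^ nb
                    / (pa ^ naa * pb ^ nb + thb ^ nb * thaa ^ naa) ^ 2)"
    and Z: "Z = - (mb * real na * pa ^ (na - 1) * tha ^ na / (pa ^ na + tha ^ na) ^ 2)"
  shows "(grn_field ma mb ga gb ka kb da db tha thb thaa A1 B1 na nb naa
           has_derivative grn_jacobian ga gb da db ka kb X Y Z) (at (ra, rb, pa, pb))"
proof -
  have "grn_field ma mb ga gb ka kb da db tha thb thaa A1 B1 na nb naa = (\<lambda>x.
     (ma * thb ^ nb * fst (snd (snd x)) ^ naa
        / (fst (snd (snd x)) ^ naa * snd (snd (snd x)) ^ nb + thb ^ nb * thaa ^ naa) - ga * fst x + A1,
      mb * tha ^ na / (fst (snd (snd x)) ^ na + tha ^ na) - gb * fst (snd x) + B1,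
      ka * fst x - da * fst (snd (snd x)),
      kb * fst (snd x) - db * snd (snd (snd x))))"
    using assms(1-3)
    by (auto simp: grn_field_def hill_and_gate_eq hill_repression_eq split_def)
  then show ?thesis
    apply (simp only:)
    apply (rule has_derivative_eq_rhs)
     apply (rule has_derivative_Pair has_derivative_add has_derivative_diff has_derivative_mult_right
        and_gate_term_has_derivative[OF assms(2-5) X Y] repression_term_has_derivative[OF assms(1,4) Z]
        has_derivative_fst has_derivative_snd has_derivative_ident has_derivative_const)+
    apply (auto simp: grn_jacobian_def split_def algebra_simps)
    done
qed

theorem theorem2:
  fixes ma mb ga gb ka kb da db tha thb thaa A1 B1 ra rb pa pb :: real
    and na nb naa :: nat
  assumes pos: "ma > 0" "mb > 0" "ga > 0" "gb > 0" "ka > 0" "kb > 0" "da > 0" "db > 0"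
      "tha > 0" "thb > 0" "thaa > 0"
    and nonneg: "A1 \<ge> 0" "B1 \<ge> 0"
    and npos: "na > 0" "nb > 0" "naa > 0"
    and steady: "grn_field ma mb ga gb ka kb da db tha thb thaa A1 B1 na nb naa (ra, rb, pa, pb) = 0"
    and ppos: "pa > 0" "pb > 0"
    and X_def: "X = ma * real naa * pa ^ (naa - 1) * thb ^ (2 * nb) * thaa ^ naa
                    / (pa ^ naa * pb ^ nb + thb ^ nb * thaa ^ naa) ^ 2"
    and Y_def: "Y = - (ma * real nb * pa ^ (2 * naa) * pb ^ (nb - 1) * thb ^ nb
                    / (pa ^ naa * pb ^ nb + thb ^ nb * thaa ^ naa) ^ 2)"
    and Z_def: "Z = - (mb * real na * pa ^ (na - 1) * tha ^ na / (pa ^ na + tha ^ na) ^ 2)"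
    and e1_def: "e1 = ga + gb + da + db"
    and e2_def: "e2 = ga * gb + (ga + gb) * (da + db) + da * db - ka * X"
    and e3_def: "e3 = da * db * (ga + gb) + (da + db) * ga * gb - ka * (db + gb) * X"
    and e4_def: "e4 = ga * gb * da * db - ka * kb * Y * Z - ka * gb * db * X"
    and h1: "e1 > 0" and h3: "e3 > 0" and h4: "e4 > 0"
    and h5: "e1 * e2 * e3 - e1 ^ 2 * e4 - e3 ^ 2 > 0"
  shows "locally_asymptotically_stable
           (grn_field ma mb ga gb ka kb da db tha thb thaa A1 B1 na nb naa) (ra, rb, pa, pb)"
proof -
  note jacobian = grn_field_has_derivative[OF pos(9-11) ppos X_def Y_def Z_def]
  note characteristic_quartic =
    grn_jacobian_quartic[of ga gb da db ka kb X Y Z, folded e1_def e2_def e3_def e4_def]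
  from steady jacobian characteristic_quartic h1 h3 h4 h5 show ?thesis
    by (rule locally_asymptotically_stable_of_hurwitz4_linearization)
qed

end
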